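(* Consider Algorithm 1 with $x_0=0$, run on arbitrary vectors $g_t$ and non-negative learning rates $\eta_t$. For any $t\ge1$ and any $x^*\in\mathbb{R}^d$ there exists a number $\tilde x_t$ between $\|x^*\|$ and $\|x_t\|$ such that $$\frac{\|x^*-x_t\|^2}{S_{t-1}+2}\min\Big\{1,\frac1{\tilde x_t}\Big\}\le B_{\phi_t}(x^*,x_t)\le2\|x^*-x_t\|^2(S_{t-1}^2+Q_{t-1})\exp(Q_{t-1}),$$ with the convention $\min\{1,1/0\}=1$.
   Context: $\|\cdot\|$ is the Euclidean norm. For differentiable $f$, $B_f(x,y)=f(x)-f(y)-\langle\nabla f(y),x-y\rangle$. Auxiliary functions: $\psi^*(\theta,S,Q)=\exp\big(\max_{\beta\in[-1/2,1/2]}(\theta\beta-\beta^2S^2)-Q\big)$ for $\theta\in\mathbb{R},S>0,Q\ge0$; $\psi(x,S,Q)=\sup_{\theta\in\mathbb{R}}(\theta x-\psi^*(\theta,S,Q))$. Algorithm 1 with $x_0=0$: $S_0^2=4$, $Q_0=0$, $\theta_0=0$. For $t=1,2,\dots$: $\phi_t(x)=\psi(\|x\|,S_{t-1},Q_{t-1})$; $x_t$ is the unique minimizer of $\phi_t(x)-\langle\theta_{t-1},x\rangle$; receive $g_t$; $\ell_t=\eta_tg_t$, $S_t^2=S_{t-1}^2+\|\ell_t\|^2$ ($S_t>0$), $Q_t=Q_{t-1}+\|\ell_t\|^2/S_t^2$, $\theta_t=\theta_{t-1}-\ell_t$. *)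

theory Defs
  imports "HOL-Analysis.Analysis"
begin

definition bregman :: "('a::real_normed_vector \<Rightarrow> real) \<Rightarrow> 'a \<Rightarrow> 'a \<Rightarrow> real" where
  "bregman f x y = f x - f y - frechet_derivative f (at y) (x - y)"

definition psi_star :: "real \<Rightarrow> real \<Rightarrow> real \<Rightarrow> real" where
  "psi_star \<theta> S Q = exp (Sup ((\<lambda>\<beta>. \<theta> * \<beta> - \<beta>\<^sup>2 * S\<^sup>2) ` {-1/2..1/2}) - Q)"

definition psi :: "real \<Rightarrow> real \<Rightarrow> real \<Rightarrow> real" where
  "psi x S Q = Sup (range (\<lambda>\<theta>. \<theta> * x - psi_star \<theta> S Q))"

text \<open>Algorithm 1 state, driven by learning rates eta and vectors g (indices t = 1,2,...;
  the values eta 0, g 0 are never used). ell_t = eta_t g_t.\<close>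
fun alg_Ssq :: "(nat \<Rightarrow> real) \<Rightarrow> (nat \<Rightarrow> 'a::euclidean_space) \<Rightarrow> nat \<Rightarrow> real" where
  "alg_Ssq \<eta> g 0 = 4"
| "alg_Ssq \<eta> g (Suc t) = alg_Ssq \<eta> g t + (norm (\<eta> (Suc t) *\<^sub>R g (Suc t)))\<^sup>2"

definition alg_S :: "(nat \<Rightarrow> real) \<Rightarrow> (nat \<Rightarrow> 'a::euclidean_space) \<Rightarrow> nat \<Rightarrow> real" where
  "alg_S \<eta> g t = sqrt (alg_Ssq \<eta> g t)"

fun alg_Q :: "(nat \<Rightarrow> real) \<Rightarrow> (nat \<Rightarrow> 'a::euclidean_space) \<Rightarrow> nat \<Rightarrow> real" where
  "alg_Q \<eta> g 0 = 0"
| "alg_Q \<eta> g (Suc t) = alg_Q \<eta> g t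
     + (norm (\<eta> (Suc t) *\<^sub>R g (Suc t)))\<^sup>2 / alg_Ssq \<eta> g (Suc t)"

fun alg_theta :: "(nat \<Rightarrow> real) \<Rightarrow> (nat \<Rightarrow> 'a::euclidean_space) \<Rightarrow> nat \<Rightarrow> 'a" where
  "alg_theta \<eta> g 0 = 0"
| "alg_theta \<eta> g (Suc t) = alg_theta \<eta> g t - \<eta> (Suc t) *\<^sub>R g (Suc t)"

definition alg_phi :: "(nat \<Rightarrow> real) \<Rightarrow> (nat \<Rightarrow> 'a::euclidean_space) \<Rightarrow> nat \<Rightarrow> 'a \<Rightarrow> real" where
  "alg_phi \<eta> g t x = psi (norm x) (alg_S \<eta> g (t - 1)) (alg_Q \<eta> g (t - 1))"

definition alg_x :: "(nat \<Rightarrow> real) \<Rightarrow> (nat \<Rightarrow> 'a::euclidean_space) \<Rightarrow> nat \<Rightarrow> 'a" where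
  "alg_x \<eta> g t = (if t = 0 then 0 else
     (THE x. \<forall>y. alg_phi \<eta> g t x - inner (alg_theta \<eta> g (t - 1)) x
                 \<le> alg_phi \<eta> g t y - inner (alg_theta \<eta> g (t - 1)) y))"

definition min_one_inv :: "real \<Rightarrow> real" where
  "min_one_inv r = (if r = 0 then 1 else min 1 (1 / r))"

end

theory Submission
  imports Defs
begin

text \<open>
  Write F for \<open>psi_star \<cdot> S Q\<close>. The maximum defining it is attained at the clipped vertex of a
  parabola, so \<open>F = exp (huber - Q)\<close> with a Huber function \<open>huber\<close>; hence F is differentiable
  and its derivative increases with slope at least \<open>mu = exp (-Q) / (2 S\<^sup>2)\<close>.
  Then \<open>psi \<cdot> S Q\<close>, the convex conjugate of F, is differentiable with derivative the inverse of
  \<open>F'\<close>, and its one-dimensional Bregman divergence is at most \<open>(b - a)\<^sup>2 / (2 mu)\<close>.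
  Conversely \<open>F'\<close> grows at most like \<open>2 max 1 F'\<close> on \<open>[0, \<infinity>)\<close>, so on \<open>[0, R]\<close> the divergence is
  at least \<open>(b - a)\<^sup>2 / (4 max 1 R)\<close>.
  For \<open>\<phi> = psi (norm \<cdot>) S Q\<close> the minimiser of \<open>\<phi> - \<langle>\<theta>, \<cdot>\<rangle>\<close> is the point in direction \<theta>
  of norm \<open>F' (norm \<theta>)\<close>, where \<open>\<nabla>\<phi> = \<theta>\<close>; the Bregman divergence of \<phi> there is the
  one-dimensional divergence between the norms plus a nonnegative Cauchy-Schwarz defect, and
  both parts obey the same two bounds.
\<close>

lemma DERIV_of_slope_bounds:
  fixes f f' :: "real \<Rightarrow> real"
  assumes lower: "\<And>y. (y - x) * f' x \<le> f y - f x"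
    and upper: "\<And>y. f y - f x \<le> (y - x) * f' y"
    and cont: "isCont f' x"
  shows "(f has_real_derivative f' x) (at x)"
proof -
  have slope_between: "min (f' x) (f' y) \<le> (f y - f x) / (y - x) \<and> (f y - f x) / (y - x) \<le> max (f' x) (f' y)"
    if "y \<noteq> x" for y
  proof (cases "x < y")
    case True
    then have "f' x \<le> (f y - f x) / (y - x)" "(f y - f x) / (y - x) \<le> f' y"
      using lower[of y] upper[of y] by (simp_all add: field_simps)
    then show ?thesis by linarith
  next
    case False
    with that have "y < x" by simp
    then have "(f y - f x) / (y - x) \<le> f' x" "f' y \<le> (f y - f x) / (y - x)"
      using lower[of y] upper[of y] by (simp_all add: field_simps)
    then show ?thesis by linarith
  qed
  have lim: "(f' \<longlongrightarrow> f' x) (at x)" using cont isCont_def by blast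
  have "((\<lambda>y. (f y - f x) / (y - x)) \<longlongrightarrow> f' x) (at x)"
  proof (rule tendsto_sandwich)
    show "\<forall>\<^sub>F y in at x. min (f' x) (f' y) \<le> (f y - f x) / (y - x)"
      and "\<forall>\<^sub>F y in at x. (f y - f x) / (y - x) \<le> max (f' x) (f' y)"
      using slope_between by (auto simp: eventually_at_filter)
    show "((\<lambda>y. min (f' x) (f' y)) \<longlongrightarrow> f' x) (at x)"
      using tendsto_min[OF tendsto_const[of "f' x"] lim] unfolding min.idem .
    show "((\<lambda>y. max (f' x) (f' y)) \<longlongrightarrow> f' x) (at x)"
      using tendsto_max[OF tendsto_const[of "f' x"] lim] unfolding max.idem .
  qed
  then show ?thesis by (simp add: has_field_derivative_iff)
qed

lemma quadratic_minorant_of_strongly_mono_deriv: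
  fixes f f' :: "real \<Rightarrow> real"
  assumes deriv: "\<And>x. (f has_real_derivative f' x) (at x)"
    and strongly_mono: "\<And>x y. min u v \<le> x \<Longrightarrow> x \<le> y \<Longrightarrow> y \<le> max u v \<Longrightarrow> m * (y - x) \<le> f' y - f' x"
  shows "f v + f' v * (u - v) + m / 2 * (u - v)\<^sup>2 \<le> f u"
proof -
  define k where "k x = f x - m / 2 * x\<^sup>2" for x
  have k_deriv: "(k has_real_derivative f' x - m * x) (at x)" for x
    unfolding k_def[abs_def] by (rule derivative_eq_intros deriv | simp)+
  have k_mono: "f' x - m * x \<le> f' y - m * y" if "min u v \<le> x" "x \<le> y" "y \<le> max u v" for x y
    using strongly_mono[OF that] by (simp add: algebra_simps)
  have "(f' v - m * v) * (u - v) \<le> k u - k v"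
  proof (cases u v rule: linorder_cases)
    case less
    then obtain z where "u < z" "z < v" "k v - k u = (v - u) * (f' z - m * z)"
      using MVT2[OF less k_deriv] by blast
    moreover have "(v - u) * (f' z - m * z) \<le> (v - u) * (f' v - m * v)"
      using less k_mono[of z v] \<open>u < z\<close> \<open>z < v\<close> by (intro mult_left_mono) auto
    ultimately show ?thesis by (simp add: algebra_simps)
  next
    case greater
    then obtain z where "v < z" "z < u" "k u - k v = (u - v) * (f' z - m * z)"
      using MVT2[OF greater k_deriv] by blast
    moreover have "(u - v) * (f' v - m * v) \<le> (u - v) * (f' z - m * z)"
      using greater k_mono[of v z] \<open>v < z\<close> \<open>z < u\<close> by (intro mult_left_mono) auto
    ultimately show ?thesis by (simp add: algebra_simps)
  qed simp
  then show ?thesis by (simp add: k_def power2_eq_square algebra_simps)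
qed

lemma strongly_mono_of_odd:
  fixes f :: "real \<Rightarrow> real"
  assumes odd: "\<And>x. f (- x) = - f x"
    and nonneg: "\<And>x y. 0 \<le> x \<Longrightarrow> x \<le> y \<Longrightarrow> m * (y - x) \<le> f y - f x"
    and "x \<le> y"
  shows "m * (y - x) \<le> f y - f x"
proof -
  have "f 0 = 0" using odd[of 0] by simp
  consider "0 \<le> x" | "y \<le> 0" | "x < 0" "0 < y" by linarith
  then show ?thesis
  proof cases
    case 1
    then show ?thesis using nonneg \<open>x \<le> y\<close> by blast
  next
    case 2
    then show ?thesis using nonneg[of "- y" "- x"] \<open>x \<le> y\<close> by (simp add: odd algebra_simps)
  next
    case 3
    then show ?thesis
      using nonneg[of 0 "- x"] nonneg[of 0 y] \<open>f 0 = 0\<close> by (simp add: odd algebra_simps)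
  qed
qed

section \<open>Functions of the norm\<close>

lemma radial_bregman_bounds:
  fixes G :: "real \<Rightarrow> real" and c k K :: real and v z :: "'a::real_inner"
  defines "y \<equiv> c *\<^sub>R v"
  assumes "0 \<le> c"
    and lower_1d: "k * (norm z - norm y)\<^sup>2 \<le> G (norm z) - G (norm y) - norm v * (norm z - norm y)"
    and upper_1d: "G (norm z) - G (norm y) - norm v * (norm z - norm y) \<le> K * (norm z - norm y)\<^sup>2"
    and slope_lower: "2 * k * norm y \<le> norm v"
    and slope_upper: "norm v \<le> 2 * K * norm y"
  shows "k * (norm (z - y))\<^sup>2 \<le> G (norm z) - G (norm y) - inner v (z - y)"
    and "G (norm z) - G (norm y) - inner v (z - y) \<le> K * (norm (z - y))\<^sup>2"
proof -
  \<comment> \<open>Both sides split along the Cauchy-Schwarz defect \<open>w\<close>.\<close>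
  define n b w where "n = norm v" and "b = norm z" and "w = norm v * norm z - inner v z"
  have "0 \<le> w"
    using norm_cauchy_schwarz[of v z] by (simp add: w_def)
  have norm_y: "norm y = c * n"
    using \<open>0 \<le> c\<close> by (simp add: y_def n_def)
  have "inner v y = c * n\<^sup>2"
    by (simp add: y_def n_def power2_norm_eq_inner)
  then have bregman_split: "G b - G (norm y) - inner v (z - y) = (G b - G (norm y) - n * (b - norm y)) + w"
    by (simp add: norm_y w_def n_def b_def inner_diff_right power2_eq_square algebra_simps)
  have "(norm (z - y))\<^sup>2 = inner (z - y) (z - y)"
    by (simp only: power2_norm_eq_inner)
  also have "\<dots> = inner z z - 2 * c * inner v z + c\<^sup>2 * inner v v"
    by (simp add: y_def inner_diff_left inner_diff_right inner_commute[of z v] power2_eq_square algebra_simps)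
  also have "\<dots> = b\<^sup>2 - 2 * c * inner v z + c\<^sup>2 * n\<^sup>2"
    by (simp add: b_def n_def power2_norm_eq_inner)
  finally have dist_split: "(norm (z - y))\<^sup>2 = (b - norm y)\<^sup>2 + 2 * c * w"
    by (simp add: norm_y w_def n_def b_def power2_eq_square algebra_simps)
  have "2 * k * c * w \<le> w \<and> w \<le> 2 * K * c * w"
  proof (cases "n = 0")
    case True
    then show ?thesis by (simp add: w_def n_def)
  next
    case False
    then have "2 * k * c \<le> 1" "1 \<le> 2 * K * c"
      using slope_lower slope_upper norm_ge_zero[of v] by (simp_all add: norm_y n_def mult.assoc)
    then show ?thesis
      using \<open>0 \<le> w\<close> mult_right_mono[of "2 * k * c" 1 w] mult_right_mono[of 1 "2 * K * c" w] by simp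
  qed
  then show "k * (norm (z - y))\<^sup>2 \<le> G (norm z) - G (norm y) - inner v (z - y)"
    and "G (norm z) - G (norm y) - inner v (z - y) \<le> K * (norm (z - y))\<^sup>2"
    using lower_1d upper_1d unfolding dist_split b_def[symmetric] n_def[symmetric] bregman_split
    by (simp_all add: distrib_left)
qed

lemma has_derivative_of_quadratic_remainder:
  fixes f :: "'a::real_normed_vector \<Rightarrow> real"
  assumes "bounded_linear L"
    and remainder: "\<And>z. \<bar>f z - f y - L (z - y)\<bar> \<le> K * (norm (z - y))\<^sup>2"
  shows "(f has_derivative L) (at y)"
  unfolding has_derivative_at_alt
proof (intro conjI assms allI impI)
  fix e :: real
  assume "0 < e"
  show "\<exists>d>0. \<forall>z. norm (z - y) < d \<longrightarrow> norm (f z - f y - L (z - y)) \<le> e * norm (z - y)"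
  proof (intro exI conjI allI impI)
    show "0 < e / (\<bar>K\<bar> + 1)" using \<open>0 < e\<close> by simp
    fix z
    assume "norm (z - y) < e / (\<bar>K\<bar> + 1)"
    then have "(\<bar>K\<bar> + 1) * norm (z - y) \<le> e"
      by (simp add: field_simps)
    moreover have "K * norm (z - y) \<le> (\<bar>K\<bar> + 1) * norm (z - y)"
      by (intro mult_right_mono) auto
    ultimately have "K * norm (z - y) \<le> e"
      by linarith
    then have "K * (norm (z - y))\<^sup>2 \<le> e * norm (z - y)"
      using mult_right_mono[of "K * norm (z - y)" e "norm (z - y)"] by (simp add: power2_eq_square mult.assoc)
    with remainder[of z] show "norm (f z - f y - L (z - y)) \<le> e * norm (z - y)"
      by simp
  qed
qed

lemma the_argmin_eq_of_bregman_pos: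
  fixes f :: "'a::real_inner \<Rightarrow> real"
  assumes "\<And>z. z \<noteq> y \<Longrightarrow> 0 < f z - f y - inner v (z - y)"
  shows "(THE x. \<forall>z. f x - inner v x \<le> f z - inner v z) = y"
proof (rule the_equality)
  show "\<forall>z. f y - inner v y \<le> f z - inner v z"
    using assms by (force simp: inner_diff_right)
  show "x = y" if "\<forall>z. f x - inner v x \<le> f z - inner v z" for x
    using that[rule_format, of y] assms[of x] by (force simp: inner_diff_right)
qed

section \<open>Conjugates of strongly convex functions on the line\<close>

locale strongly_convex_real =
  fixes F F' :: "real \<Rightarrow> real" and \<mu> :: real
  assumes deriv: "\<And>x. (F has_real_derivative F' x) (at x)"
    and deriv_cont: "\<And>x. isCont F' x"
    and mu_pos: "0 < \<mu>"
    and deriv_strongly_mono: "\<And>x y. x \<le> y \<Longrightarrow> \<mu> * (y - x) \<le> F' y - F' x"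
begin

lemma strongly_convex: "F v + F' v * (u - v) + \<mu> / 2 * (u - v)\<^sup>2 \<le> F u"
  using quadratic_minorant_of_strongly_mono_deriv[OF deriv deriv_strongly_mono] by blast

lemma inj_deriv: "inj F'"
proof (rule linorder_injI)
  fix x y :: real
  assume "x < y"
  then have "0 < \<mu> * (y - x)" using mu_pos by simp
  also have "\<dots> \<le> F' y - F' x" using deriv_strongly_mono \<open>x < y\<close> by simp
  finally show "F' x \<noteq> F' y" by simp
qed

lemma surj_deriv: "surj F'"
proof -
  have "\<exists>t. F' t = r" for r
  proof (cases "F' 0 \<le> r")
    case True
    define b where "b = (r - F' 0) / \<mu>"
    have "0 \<le> b" using True mu_pos by (simp add: b_def)
    moreover have "r \<le> F' b" using deriv_strongly_mono[OF \<open>0 \<le> b\<close>] mu_pos by (simp add: b_def)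
    ultimately show ?thesis using IVT[of F' 0 r b] True deriv_cont by blast
  next
    case False
    define a where "a = (r - F' 0) / \<mu>"
    have "a \<le> 0" using False mu_pos by (simp add: a_def divide_nonpos_pos)
    moreover have "F' a \<le> r" using deriv_strongly_mono[OF \<open>a \<le> 0\<close>] mu_pos by (simp add: a_def)
    ultimately show ?thesis using IVT[of F' a r 0] False deriv_cont by fastforce
  qed
  then show ?thesis by (metis surjI)
qed

lemma deriv_inv_deriv [simp]: "F' (inv F' r) = r"
  using surj_deriv by (rule surj_f_inv_f)

lemma inv_deriv_deriv [simp]: "inv F' (F' t) = t"
  using inj_deriv by (rule inv_f_f)

lemma inv_deriv_lipschitz:
  assumes "r \<le> s"
  shows "inv F' r \<le> inv F' s" and "\<mu> * (inv F' s - inv F' r) \<le> s - r"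
proof -
  show mono: "inv F' r \<le> inv F' s"
  proof (rule ccontr)
    assume "\<not> inv F' r \<le> inv F' s"
    then have "0 < \<mu> * (inv F' r - inv F' s)" using mu_pos by simp
    also have "\<dots> \<le> r - s" using deriv_strongly_mono[of "inv F' s" "inv F' r"] \<open>\<not> _\<close> by simp
    finally show False using assms by simp
  qed
  show "\<mu> * (inv F' s - inv F' r) \<le> s - r"
    using deriv_strongly_mono[OF mono] by simp
qed

lemma isCont_inv_deriv: "isCont (inv F') r"
proof -
  have "(1 / \<mu>)-lipschitz_on UNIV (inv F')"
  proof (rule lipschitz_onI)
    fix r s :: real
    have "\<mu> * dist (inv F' r) (inv F' s) \<le> dist r s"
      using inv_deriv_lipschitz[of r s] inv_deriv_lipschitz[of s r]
      by (cases "r \<le> s") (auto simp: dist_real_def abs_if algebra_simps)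
    then show "dist (inv F' r) (inv F' s) \<le> 1 / \<mu> * dist r s"
      using mu_pos by (simp add: field_simps)
  qed (use mu_pos in simp)
  then show ?thesis
    using lipschitz_on_continuous_on continuous_on_eq_continuous_at by blast
qed

definition conjugate :: "real \<Rightarrow> real" where
  "conjugate r = Sup (range (\<lambda>\<theta>. \<theta> * r - F \<theta>))"

lemma fenchel_young_gap: "\<theta> * r - F \<theta> + \<mu> / 2 * (\<theta> - inv F' r)\<^sup>2 \<le> inv F' r * r - F (inv F' r)"
  using strongly_convex[of "inv F' r" \<theta>] by (simp add: algebra_simps)

lemma fenchel_young_max: "\<theta> * r - F \<theta> \<le> inv F' r * r - F (inv F' r)"
proof -
  have "0 \<le> \<mu> / 2 * (\<theta> - inv F' r)\<^sup>2" using mu_pos by simp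
  with fenchel_young_gap[of \<theta> r] show ?thesis by linarith
qed

lemma conjugate_eq: "conjugate r = inv F' r * r - F (inv F' r)"
  unfolding conjugate_def by (rule cSup_eq_maximum) (auto intro: fenchel_young_max)

lemma fenchel_young: "\<theta> * r - F \<theta> \<le> conjugate r"
  unfolding conjugate_eq by (rule fenchel_young_max)

lemma conjugate_deriv: "(conjugate has_real_derivative inv F' r) (at r)"
proof (rule DERIV_of_slope_bounds[OF _ _ isCont_inv_deriv])
  fix s
  show "(s - r) * inv F' r \<le> conjugate s - conjugate r"
    using fenchel_young[of "inv F' r" s] by (simp add: conjugate_eq algebra_simps)
  show "conjugate s - conjugate r \<le> (s - r) * inv F' s"
    using fenchel_young[of "inv F' s" r] by (simp add: conjugate_eq algebra_simps)
qed

lemma conjugate_bregman_le: "conjugate s - conjugate r - inv F' r * (s - r) \<le> (s - r)\<^sup>2 / (2 * \<mu>)"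
proof -
  define d where "d = inv F' s - inv F' r"
  have "conjugate s - conjugate r - inv F' r * (s - r) = d * r - F (inv F' s) + F (inv F' r) + d * (s - r)"
    by (simp add: conjugate_eq d_def algebra_simps)
  also have "\<dots> \<le> d * (s - r) - \<mu> / 2 * d\<^sup>2"
    using strongly_convex[of "inv F' r" "inv F' s"] by (simp add: d_def algebra_simps)
  also have "\<dots> = (s - r)\<^sup>2 / (2 * \<mu>) - (s - r - \<mu> * d)\<^sup>2 / (2 * \<mu>)"
    using mu_pos by (simp add: power2_eq_square field_simps)
  also have "\<dots> \<le> (s - r)\<^sup>2 / (2 * \<mu>)"
    using mu_pos by simp
  finally show ?thesis .
qed

lemma conjugate_bregman_ge:
  assumes "0 < L"
    and inv_deriv_expanding:
      "\<And>x y. min r s \<le> x \<Longrightarrow> x \<le> y \<Longrightarrow> y \<le> max r s \<Longrightarrow> y - x \<le> L * (inv F' y - inv F' x)"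
  shows "(s - r)\<^sup>2 / (2 * L) \<le> conjugate s - conjugate r - inv F' r * (s - r)"
proof -
  have "1 / L * (y - x) \<le> inv F' y - inv F' x"
    if "min s r \<le> x" "x \<le> y" "y \<le> max s r" for x y
    using inv_deriv_expanding[of x y] that \<open>0 < L\<close> by (simp add: min.commute max.commute field_simps)
  from quadratic_minorant_of_strongly_mono_deriv[where u = s and v = r, OF conjugate_deriv this]
  show ?thesis by (simp add: algebra_simps)
qed

end

section \<open>The potential\<close>

locale psi_potential =
  fixes S Q :: real
  assumes S_ge_2: "2 \<le> S" and Q_nonneg: "0 \<le> Q"
begin

lemma S_sq_ge_4: "4 \<le> S\<^sup>2"
  using power_mono[OF S_ge_2, of 2] by simp

lemma S_pos: "0 < S"
  using S_ge_2 by simp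

definition opt_beta :: "real \<Rightarrow> real" where
  "opt_beta \<theta> = max (- 1 / 2) (min (1 / 2) (\<theta> / (2 * S\<^sup>2)))"

text \<open>\<open>huber \<theta>\<close> is \<open>\<theta>\<^sup>2 / (4 S\<^sup>2)\<close> for \<open>\<bar>\<theta>\<bar> \<le> S\<^sup>2\<close> and \<open>\<bar>\<theta>\<bar> / 2 - S\<^sup>2 / 4\<close> beyond.\<close>

definition huber :: "real \<Rightarrow> real" where
  "huber \<theta> = \<theta> * opt_beta \<theta> - (opt_beta \<theta>)\<^sup>2 * S\<^sup>2"

definition psi_star_deriv :: "real \<Rightarrow> real" where
  "psi_star_deriv \<theta> = exp (huber \<theta> - Q) * opt_beta \<theta>"

definition mu :: real where
  "mu = exp (- Q) / (2 * S\<^sup>2)"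

lemma mu_pos: "0 < mu"
  using S_pos by (simp add: mu_def)

lemma opt_beta_bounds: "- 1 / 2 \<le> opt_beta \<theta>" "opt_beta \<theta> \<le> 1 / 2"
  by (auto simp: opt_beta_def)

lemma huber_ge:
  assumes "- 1 / 2 \<le> \<beta>" "\<beta> \<le> 1 / 2"
  shows "\<theta> * \<beta> - \<beta>\<^sup>2 * S\<^sup>2 \<le> huber \<theta>"
proof -
  define c where "c = \<theta> / (2 * S\<^sup>2)"
  have vertex_form: "\<theta> * b - b\<^sup>2 * S\<^sup>2 = S\<^sup>2 * (c\<^sup>2 - (b - c)\<^sup>2)" for b
    using S_pos by (simp add: c_def power2_eq_square field_simps)
  have "\<bar>opt_beta \<theta> - c\<bar> \<le> \<bar>\<beta> - c\<bar>"
    using assms by (auto simp: opt_beta_def c_def)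
  then have "(opt_beta \<theta> - c)\<^sup>2 \<le> (\<beta> - c)\<^sup>2"
    by (simp add: abs_le_square_iff)
  then show ?thesis
    unfolding huber_def vertex_form by (simp add: mult_left_mono)
qed

lemma psi_star_eq: "psi_star \<theta> S Q = exp (huber \<theta> - Q)"
proof -
  have "Sup ((\<lambda>\<beta>. \<theta> * \<beta> - \<beta>\<^sup>2 * S\<^sup>2) ` {- 1 / 2..1 / 2}) = huber \<theta>"
    by (rule cSup_eq_maximum)
      (use huber_ge opt_beta_bounds in \<open>auto simp: huber_def image_iff intro!: bexI[of _ "opt_beta \<theta>"]\<close>)
  then show ?thesis by (simp add: psi_star_def)
qed

lemma huber_slope_bounds:
  "(y - x) * opt_beta x \<le> huber y - huber x" "huber y - huber x \<le> (y - x) * opt_beta y"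
  using huber_ge[OF opt_beta_bounds, of y x] huber_ge[OF opt_beta_bounds, of x y]
  by (simp_all add: huber_def algebra_simps)

lemma isCont_opt_beta: "isCont opt_beta x"
  unfolding opt_beta_def by (intro continuous_intros) (use S_pos in simp)

lemma huber_deriv: "(huber has_real_derivative opt_beta x) (at x)"
  by (rule DERIV_of_slope_bounds[OF huber_slope_bounds isCont_opt_beta])

lemma psi_star_has_deriv: "((\<lambda>\<theta>. psi_star \<theta> S Q) has_real_derivative psi_star_deriv x) (at x)"
  unfolding psi_star_eq psi_star_deriv_def
  by (rule derivative_eq_intros huber_deriv | simp)+

lemma isCont_psi_star_deriv: "isCont psi_star_deriv x"
  unfolding psi_star_deriv_def
  using DERIV_isCont[OF huber_deriv] isCont_opt_beta by (intro continuous_intros)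

lemma psi_star_deriv_odd: "psi_star_deriv (- \<theta>) = - psi_star_deriv \<theta>"
proof -
  have "opt_beta (- \<theta>) = - opt_beta \<theta>" by (auto simp: opt_beta_def)
  then show ?thesis by (simp add: psi_star_deriv_def huber_def)
qed

lemma opt_beta_nonneg: "0 \<le> \<theta> \<Longrightarrow> 0 \<le> opt_beta \<theta>"
  unfolding opt_beta_def by (simp add: max.coboundedI2)

lemma psi_star_deriv_nonneg: "0 \<le> \<theta> \<Longrightarrow> 0 \<le> psi_star_deriv \<theta>"
  by (simp add: psi_star_deriv_def opt_beta_nonneg)

lemma psi_star_deriv_0 [simp]: "psi_star_deriv 0 = 0"
  by (simp add: psi_star_deriv_def opt_beta_def)

lemma huber_nonneg: "0 \<le> huber \<theta>"
  using huber_ge[of 0 \<theta>] by simp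

lemma huber_mono:
  assumes "0 \<le> x" "x \<le> y"
  shows "huber x \<le> huber y"
proof -
  have "0 \<le> (y - x) * opt_beta x" using assms opt_beta_nonneg by simp
  with huber_slope_bounds(1)[of y x] show ?thesis by linarith
qed

lemma psi_star_deriv_increment_central:
  assumes "0 \<le> x" "x \<le> y" "y \<le> S\<^sup>2"
  shows "mu * (y - x) \<le> psi_star_deriv y - psi_star_deriv x"
proof -
  define ex ey where "ex = exp (huber x - Q)" and "ey = exp (huber y - Q)"
  have beta: "opt_beta x = x / (2 * S\<^sup>2)" "opt_beta y = y / (2 * S\<^sup>2)"
    using assms S_pos by (auto simp: opt_beta_def field_simps)
  have "exp (- Q) \<le> ey"
    using huber_nonneg[of y] by (simp add: ey_def)
  then have "exp (- Q) * ((y - x) / (2 * S\<^sup>2)) \<le> ey * ((y - x) / (2 * S\<^sup>2))"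
    using assms by (intro mult_right_mono) simp_all
  then have "mu * (y - x) \<le> ey * ((y - x) / (2 * S\<^sup>2))"
    by (simp add: mu_def)
  also have "\<dots> \<le> ey * ((y - x) / (2 * S\<^sup>2)) + opt_beta x * (ey - ex)"
    using huber_mono[OF assms(1,2)] opt_beta_nonneg[OF assms(1)] by (simp add: ex_def ey_def)
  also have "\<dots> = psi_star_deriv y - psi_star_deriv x"
    by (simp add: psi_star_deriv_def ex_def ey_def beta diff_divide_distrib algebra_simps)
  finally show ?thesis .
qed

lemma psi_star_deriv_increment_tail:
  assumes "S\<^sup>2 \<le> x" "x \<le> y"
  shows "mu * (y - x) \<le> psi_star_deriv y - psi_star_deriv x"
proof -
  define ex where "ex = exp (huber x - Q)"
  have beta: "opt_beta x = 1 / 2" "opt_beta y = 1 / 2"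
    using assms S_pos by (auto simp: opt_beta_def field_simps)
  have "exp (huber y - Q) = ex * exp ((y - x) / 2)"
    by (simp add: ex_def huber_def beta field_simps flip: exp_add)
  then have "psi_star_deriv y - psi_star_deriv x = ex * (exp ((y - x) / 2) - 1) / 2"
    by (simp add: psi_star_deriv_def ex_def beta algebra_simps)
  moreover have "ex * ((y - x) / 2) \<le> ex * (exp ((y - x) / 2) - 1)"
    using exp_ge_add_one_self[of "(y - x) / 2"] by (intro mult_left_mono) (linarith, simp add: ex_def)
  moreover have "mu * (y - x) \<le> exp (- Q) * ((y - x) / 4)"
  proof -
    have "mu \<le> exp (- Q) / 4"
      unfolding mu_def using S_sq_ge_4 S_pos by (intro divide_left_mono) simp_all
    then have "mu * (y - x) \<le> exp (- Q) / 4 * (y - x)"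
      using assms by (intro mult_right_mono) simp_all
    then show ?thesis by simp
  qed
  moreover have "exp (- Q) * ((y - x) / 4) \<le> ex * ((y - x) / 4)"
    using huber_nonneg[of x] assms by (intro mult_right_mono) (simp_all add: ex_def)
  ultimately show ?thesis by simp
qed

text \<open>Beyond \<open>S\<^sup>2\<close> the factor \<open>opt_beta\<close> is constant, but then the exponential factor grows.\<close>

lemma psi_star_deriv_strongly_mono_nonneg:
  assumes "0 \<le> x" "x \<le> y"
  shows "mu * (y - x) \<le> psi_star_deriv y - psi_star_deriv x"
proof -
  consider "y \<le> S\<^sup>2" | "S\<^sup>2 \<le> x" | "x < S\<^sup>2" "S\<^sup>2 < y" by linarith
  then show ?thesis
  proof cases
    case 3
    then show ?thesis
      using psi_star_deriv_increment_central[of x "S\<^sup>2"] psi_star_deriv_increment_tail[of "S\<^sup>2" y] assms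
      by (simp add: algebra_simps)
  qed (use assms psi_star_deriv_increment_central psi_star_deriv_increment_tail in auto)
qed

lemma psi_star_deriv_strongly_mono: "x \<le> y \<Longrightarrow> mu * (y - x) \<le> psi_star_deriv y - psi_star_deriv x"
  by (rule strongly_mono_of_odd[OF psi_star_deriv_odd psi_star_deriv_strongly_mono_nonneg])

lemma opt_beta_lipschitz: "x \<le> y \<Longrightarrow> opt_beta y - opt_beta x \<le> (y - x) / (2 * S\<^sup>2)"
  using S_pos unfolding opt_beta_def by (auto simp: field_simps max_def min_def)

lemma exp_huber_le:
  assumes "0 \<le> y"
  shows "exp (huber y - Q) / (2 * S\<^sup>2) \<le> max 1 (psi_star_deriv y)"
proof (cases "1 \<le> y")
  case True
  then have "1 / (2 * S\<^sup>2) \<le> opt_beta y"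
    using S_sq_ge_4 S_pos unfolding opt_beta_def by (auto simp: field_simps max_def min_def)
  then have "exp (huber y - Q) * (1 / (2 * S\<^sup>2)) \<le> psi_star_deriv y"
    unfolding psi_star_deriv_def by (intro mult_left_mono) simp_all
  then show ?thesis by simp
next
  case False
  have "huber y \<le> y * opt_beta y" by (simp add: huber_def)
  also have "\<dots> \<le> 1 * (1 / 2)"
    using False assms opt_beta_nonneg opt_beta_bounds by (intro mult_mono) auto
  finally have "exp (huber y - Q) \<le> exp 1"
    using Q_nonneg by simp
  also have "\<dots> \<le> 2 * S\<^sup>2"
    using exp_le S_sq_ge_4 by linarith
  finally have "exp (huber y - Q) / (2 * S\<^sup>2) \<le> 1"
    using S_pos by (simp add: field_simps)
  then show ?thesis by linarith
qed

lemma psi_star_deriv_increment_le: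
  assumes "0 \<le> x" "x \<le> y"
  shows "psi_star_deriv y - psi_star_deriv x \<le> 2 * max 1 (psi_star_deriv y) * (y - x)"
proof -
  define ex ey where "ex = exp (huber x - Q)" and "ey = exp (huber y - Q)"
  have beta_x: "0 \<le> opt_beta x" "opt_beta x \<le> 1 / 2"
    using assms opt_beta_nonneg opt_beta_bounds by auto
  have "ey - ex \<le> ey * (huber y - huber x)"
  proof -
    have "ey * (1 - (huber y - huber x)) \<le> ey * exp (huber x - huber y)"
      using exp_ge_add_one_self[of "huber x - huber y"] by (intro mult_left_mono) (linarith, simp add: ey_def)
    also have "\<dots> = ex" by (simp add: ex_def ey_def flip: exp_add)
    finally show ?thesis by (simp add: algebra_simps)
  qed
  also have "\<dots> \<le> ey * ((y - x) * opt_beta y)"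
    using huber_slope_bounds(2)[of y x] by (intro mult_left_mono) (simp_all add: ey_def)
  finally have "opt_beta x * (ey - ex) \<le> opt_beta x * (ey * ((y - x) * opt_beta y))"
    using beta_x by (intro mult_left_mono) simp_all
  also have "\<dots> = ey * ((y - x) * opt_beta y) * opt_beta x"
    by (simp add: ac_simps)
  also have "\<dots> \<le> ey * ((y - x) * opt_beta y) * (1 / 2)"
    using beta_x assms opt_beta_nonneg[of y] by (intro mult_left_mono) (simp_all add: ey_def)
  also have "\<dots> = (y - x) * (psi_star_deriv y / 2)"
    by (simp add: psi_star_deriv_def ey_def)
  finally have second: "opt_beta x * (ey - ex) \<le> (y - x) * (psi_star_deriv y / 2)" .
  have "ey * (opt_beta y - opt_beta x) \<le> ey * ((y - x) / (2 * S\<^sup>2))"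
    using opt_beta_lipschitz[OF assms(2)] by (intro mult_left_mono) (simp_all add: ey_def)
  also have "\<dots> = (y - x) * (ey / (2 * S\<^sup>2))"
    by simp
  also have "\<dots> \<le> (y - x) * max 1 (psi_star_deriv y)"
    using exp_huber_le[of y] assms by (intro mult_left_mono) (simp_all add: ey_def)
  finally have first: "ey * (opt_beta y - opt_beta x) \<le> (y - x) * max 1 (psi_star_deriv y)" .
  have "psi_star_deriv y - psi_star_deriv x = ey * (opt_beta y - opt_beta x) + opt_beta x * (ey - ex)"
    by (simp add: psi_star_deriv_def ex_def ey_def algebra_simps)
  also have "\<dots> \<le> (y - x) * (max 1 (psi_star_deriv y) + psi_star_deriv y / 2)"
    using first second by (simp add: distrib_left)
  also have "\<dots> \<le> (y - x) * (2 * max 1 (psi_star_deriv y))"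
    using assms by (intro mult_left_mono) auto
  finally show ?thesis by (simp add: mult.commute)
qed

sublocale strongly_convex_real "\<lambda>\<theta>. psi_star \<theta> S Q" psi_star_deriv mu
  by unfold_locales
    (simp_all add: psi_star_has_deriv isCont_psi_star_deriv mu_pos psi_star_deriv_strongly_mono)

lemma psi_eq_conjugate: "psi r S Q = conjugate r"
  by (simp add: psi_def conjugate_def)

lemma inv_psi_star_deriv_0 [simp]: "inv psi_star_deriv 0 = 0"
  using inv_deriv_deriv[of 0] by simp

lemma inv_psi_star_deriv_expanding:
  assumes "0 \<le> x" "x \<le> y" "y \<le> R"
  shows "y - x \<le> 2 * max 1 R * (inv psi_star_deriv y - inv psi_star_deriv x)"
proof -
  have "0 \<le> inv psi_star_deriv x" "inv psi_star_deriv x \<le> inv psi_star_deriv y"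
    using inv_deriv_lipschitz(1)[of 0 x] inv_deriv_lipschitz(1)[of x y] assms by simp_all
  from psi_star_deriv_increment_le[OF this]
  have "y - x \<le> 2 * max 1 y * (inv psi_star_deriv y - inv psi_star_deriv x)"
    by simp
  also have "\<dots> \<le> 2 * max 1 R * (inv psi_star_deriv y - inv psi_star_deriv x)"
    using assms inv_deriv_lipschitz(1)[of x y] by (intro mult_right_mono) auto
  finally show ?thesis .
qed

lemma psi_bregman_ge:
  assumes "0 \<le> r" "0 \<le> s" "r \<le> R" "s \<le> R"
  shows "(s - r)\<^sup>2 / (4 * max 1 R) \<le> conjugate s - conjugate r - inv psi_star_deriv r * (s - r)"
  using conjugate_bregman_ge[of "2 * max 1 R" r s] inv_psi_star_deriv_expanding assms
  by (simp add: mult.assoc)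

text \<open>For \<open>v = 0\<close> the junk value \<open>x / 0 = 0\<close> gives the right point \<open>0\<close>.\<close>

definition radial_point :: "'a::real_normed_vector \<Rightarrow> 'a" where
  "radial_point v = (psi_star_deriv (norm v) / norm v) *\<^sub>R v"

lemma norm_radial_point: "norm (radial_point v) = psi_star_deriv (norm v)"
  using psi_star_deriv_nonneg[of "norm v"] by (cases "v = 0") (simp_all add: radial_point_def)

lemma psi_norm_bregman_bounds:
  fixes v z :: "'a::real_inner"
  assumes "norm z \<le> R" "norm (radial_point v) \<le> R"
  shows "(norm (z - radial_point v))\<^sup>2 / (4 * max 1 R)
      \<le> psi (norm z) S Q - psi (norm (radial_point v)) S Q - inner v (z - radial_point v)"
    and "psi (norm z) S Q - psi (norm (radial_point v)) S Q - inner v (z - radial_point v)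
      \<le> (norm (z - radial_point v))\<^sup>2 * (S\<^sup>2 * exp Q)"
proof -
  define c where "c = psi_star_deriv (norm v) / norm v"
  define y where "y = radial_point v"
  have y_eq: "c *\<^sub>R v = y"
    by (simp add: y_def radial_point_def c_def)
  have inv_y: "inv psi_star_deriv (norm y) = norm v"
    by (simp add: y_def norm_radial_point)
  have "norm y \<le> R"
    using assms(2) by (simp add: y_def)
  have "0 \<le> c"
    using psi_star_deriv_nonneg[of "norm v"] by (simp add: c_def)
  moreover have "1 / (4 * max 1 R) * (norm z - norm y)\<^sup>2
      \<le> conjugate (norm z) - conjugate (norm y) - norm v * (norm z - norm y)"
    using psi_bregman_ge[of "norm y" "norm z" R] assms(1) \<open>norm y \<le> R\<close> by (simp add: inv_y power2_commute)
  moreover have "conjugate (norm z) - conjugate (norm y) - norm v * (norm z - norm y)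
      \<le> 1 / (2 * mu) * (norm z - norm y)\<^sup>2"
    using conjugate_bregman_le[where r = "norm y" and s = "norm z"] by (simp add: inv_y)
  moreover have "2 * (1 / (4 * max 1 R)) * norm y \<le> norm v"
    using inv_psi_star_deriv_expanding[of 0 "norm y" R] \<open>norm y \<le> R\<close> by (simp add: inv_y field_simps)
  moreover have "norm v \<le> 2 * (1 / (2 * mu)) * norm y"
    using inv_deriv_lipschitz(2)[of 0 "norm y"] mu_pos by (simp add: inv_y field_simps)
  ultimately have "1 / (4 * max 1 R) * (norm (z - y))\<^sup>2 \<le> conjugate (norm z) - conjugate (norm y) - inner v (z - y)"
    and "conjugate (norm z) - conjugate (norm y) - inner v (z - y) \<le> 1 / (2 * mu) * (norm (z - y))\<^sup>2"
    using radial_bregman_bounds[where c = c and v = v and z = z and G = conjugate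
        and k = "1 / (4 * max 1 R)" and K = "1 / (2 * mu)", unfolded y_eq] by blast+
  moreover have "1 / (2 * mu) = S\<^sup>2 * exp Q"
    by (simp add: mu_def exp_minus field_simps)
  ultimately show "(norm (z - radial_point v))\<^sup>2 / (4 * max 1 R)
      \<le> psi (norm z) S Q - psi (norm (radial_point v)) S Q - inner v (z - radial_point v)"
    and "psi (norm z) S Q - psi (norm (radial_point v)) S Q - inner v (z - radial_point v)
      \<le> (norm (z - radial_point v))\<^sup>2 * (S\<^sup>2 * exp Q)"
    by (simp_all add: psi_eq_conjugate y_def mult.commute)
qed

lemma psi_norm_has_derivative:
  fixes v :: "'a::real_inner"
  shows "((\<lambda>x. psi (norm x) S Q) has_derivative inner v) (at (radial_point v))"
proof (rule has_derivative_of_quadratic_remainder[OF bounded_linear_inner_right])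
  fix z :: 'a
  define R where "R = max (norm z) (norm (radial_point v))"
  define E where "E = psi (norm z) S Q - psi (norm (radial_point v)) S Q - inner v (z - radial_point v)"
  have "(norm (z - radial_point v))\<^sup>2 / (4 * max 1 R) \<le> E"
    and upper: "E \<le> (norm (z - radial_point v))\<^sup>2 * (S\<^sup>2 * exp Q)"
    using psi_norm_bregman_bounds[of z R v] by (simp_all add: R_def E_def)
  moreover have "0 \<le> (norm (z - radial_point v))\<^sup>2 / (4 * max 1 R)"
    by simp
  ultimately have "0 \<le> E" by linarith
  with upper show "\<bar>E\<bar> \<le> S\<^sup>2 * exp Q * (norm (z - radial_point v))\<^sup>2"
    by (simp add: mult.commute)
qed

lemma bregman_psi_norm:
  fixes v z :: "'a::real_inner"
  shows "bregman (\<lambda>x. psi (norm x) S Q) z (radial_point v)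
    = psi (norm z) S Q - psi (norm (radial_point v)) S Q - inner v (z - radial_point v)"
  using frechet_derivative_at[OF psi_norm_has_derivative[of v]] by (simp add: bregman_def)

lemma argmin_psi_norm:
  fixes v :: "'a::real_inner"
  shows "(THE x. \<forall>z. psi (norm x) S Q - inner v x \<le> psi (norm z) S Q - inner v z) = radial_point v"
proof (rule the_argmin_eq_of_bregman_pos)
  fix z :: 'a
  assume "z \<noteq> radial_point v"
  define R where "R = max (norm z) (norm (radial_point v))"
  have "0 < (norm (z - radial_point v))\<^sup>2 / (4 * max 1 R)"
    using \<open>z \<noteq> radial_point v\<close> by simp
  with psi_norm_bregman_bounds(1)[of z R v]
  show "0 < psi (norm z) S Q - psi (norm (radial_point v)) S Q - inner v (z - radial_point v)"
    by (simp add: R_def)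
qed

end

lemma min_one_inv_div_le:
  fixes S R d :: real
  assumes "2 \<le> S" "0 \<le> R"
  shows "d\<^sup>2 / (S + 2) * min_one_inv R \<le> d\<^sup>2 / (4 * max 1 R)"
proof -
  have "min_one_inv R = 1 / max 1 R"
    using \<open>0 \<le> R\<close> by (cases "R \<le> 1") (auto simp: min_one_inv_def min_def max_def field_simps)
  then have "d\<^sup>2 / (S + 2) * min_one_inv R = d\<^sup>2 / ((S + 2) * max 1 R)"
    by simp
  also have "\<dots> \<le> d\<^sup>2 / (4 * max 1 R)"
    using \<open>2 \<le> S\<close> by (intro divide_left_mono mult_right_mono) auto
  finally show ?thesis .
qed

lemma alg_Ssq_ge_4: "4 \<le> alg_Ssq \<eta> g t"
  by (induction t) (simp_all add: add_increasing2)

lemma alg_S_ge_2: "2 \<le> alg_S \<eta> g t"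
  using real_sqrt_le_mono[OF alg_Ssq_ge_4] by (simp add: alg_S_def)

lemma alg_Q_nonneg: "0 \<le> alg_Q \<eta> g t"
proof (induction t)
  case (Suc t)
  have "0 \<le> (norm (\<eta> (Suc t) *\<^sub>R g (Suc t)))\<^sup>2 / alg_Ssq \<eta> g (Suc t)"
    using alg_Ssq_ge_4[of \<eta> g "Suc t"] by simp
  with Suc show ?case by simp
qed simp

theorem lemma19:
  fixes \<eta> :: "nat \<Rightarrow> real" and g :: "nat \<Rightarrow> 'a::euclidean_space"
    and t :: nat and xs :: 'a
  assumes eta_nonneg: "\<And>s. \<eta> s \<ge> 0"
    and t_pos: "t \<ge> 1"
  shows "alg_phi \<eta> g t differentiable (at (alg_x \<eta> g t)) \<and>
    (\<exists>xt. min (norm xs) (norm (alg_x \<eta> g t)) \<le> xt \<and> xt \<le> max (norm xs) (norm (alg_x \<eta> g t)) \<and>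
      (norm (xs - alg_x \<eta> g t))\<^sup>2 / (alg_S \<eta> g (t - 1) + 2) * min_one_inv xt
        \<le> bregman (alg_phi \<eta> g t) xs (alg_x \<eta> g t) \<and>
      bregman (alg_phi \<eta> g t) xs (alg_x \<eta> g t)
        \<le> 2 * (norm (xs - alg_x \<eta> g t))\<^sup>2 * ((alg_S \<eta> g (t - 1))\<^sup>2 + alg_Q \<eta> g (t - 1))
            * exp (alg_Q \<eta> g (t - 1)))"
proof -
  \<comment> \<open>The bounds hold for learning rates of any sign.\<close>
  define S Q v where "S = alg_S \<eta> g (t - 1)" and "Q = alg_Q \<eta> g (t - 1)"
    and "v = alg_theta \<eta> g (t - 1)"
  interpret psi_potential S Q
    by unfold_locales (simp_all add: S_def Q_def alg_S_ge_2 alg_Q_nonneg)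
  have phi: "alg_phi \<eta> g t = (\<lambda>x. psi (norm x) S Q)"
    by (simp add: fun_eq_iff alg_phi_def S_def Q_def)
  have x_t: "alg_x \<eta> g t = radial_point v"
    using t_pos argmin_psi_norm[of v] by (simp add: alg_x_def phi v_def)
  define y R where "y = radial_point v" and "R = max (norm xs) (norm y)"
  have "norm xs \<le> R" "norm (radial_point v) \<le> R" "0 \<le> R"
    by (simp_all add: R_def y_def le_max_iff_disj)
  note bounds = psi_norm_bregman_bounds[OF this(1,2), folded bregman_psi_norm y_def]
  have lower: "(norm (xs - y))\<^sup>2 / (S + 2) * min_one_inv R \<le> bregman (\<lambda>x. psi (norm x) S Q) xs y"
    using min_one_inv_div_le[OF S_ge_2 \<open>0 \<le> R\<close>, of "norm (xs - y)"] bounds(1) by linarith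
  have "(norm (xs - y))\<^sup>2 * (S\<^sup>2 * exp Q) \<le> (norm (xs - y))\<^sup>2 * (2 * (S\<^sup>2 + Q) * exp Q)"
    using Q_nonneg by (intro mult_left_mono mult_right_mono) auto
  with bounds(2) have upper: "bregman (\<lambda>x. psi (norm x) S Q) xs y \<le> 2 * (norm (xs - y))\<^sup>2 * (S\<^sup>2 + Q) * exp Q"
    by (simp only: mult_ac)
  have "(\<lambda>x. psi (norm x) S Q) differentiable (at y)"
    using psi_norm_has_derivative[of v] by (auto simp: differentiable_def y_def)
  moreover have "min (norm xs) (norm y) \<le> R" "R \<le> max (norm xs) (norm y)"
    by (simp_all add: R_def)
  ultimately show ?thesis
    using lower upper unfolding phi x_t S_def[symmetric] Q_def[symmetric] y_def[symmetric]
    by (intro conjI exI[of _ R]) assumption+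
qed

end
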